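(* Let $i\ge 0$ and let $K$ be a pure $(i+1)$-dimensional simplicial complex on $n$ vertices that contains every $(i+1)$-element subset of $V(K)$ as an $i$-face. Then $$|S_{i+1}(K)|\le \frac{\mathfrak{q}_i(K)\binom{n}{i+1}}{(i+2)^2}.$$
   Context: A (finite abstract) simplicial complex $K$ on a finite vertex set $V(K)$ is a family of subsets of $V(K)$ closed under taking subsets and containing every singleton $\{v\}$, $v\in V(K)$; $K$ is on $n$ vertices if $|V(K)|=n$. An $i$-face is a member of $K$ of cardinality $i+1$, and $S_i(K)$ is the set of $i$-faces. The dimension of $K$ is the largest dimension of a face; facets are inclusion-maximal faces; $K$ is pure if all facets have the same dimension. For an $i$-face $F$, $d_K(F)$ is the number of $(i+1)$-faces of $K$ containing $F$. Two distinct $i$-faces are up-neighbors if their union is an $(i+1)$-face of $K$. The $i$-th signless up Laplacian $Q_i^{\mathrm{up}}(K)$ is the operator on $\mathbb{R}^{S_i(K)}$ given by $(Q_i^{\mathrm{up}}(K)f)(F)=d_K(F)f(F)+\sum_{F'\text{ up-neighbor of }F}f(F')$; equivalently $Q_i^{\mathrm{up}}(K)=\bar\partial_{i+1}\bar\partial_{i+1}^{T}$, where $\bar\partial_{i+1}$ is the $0/1$ matrix with rows indexed by $S_i(K)$, columns by $S_{i+1}(K)$, and entry $1$ iff the $i$-face is contained in the $(i+1)$-face. It is symmetric, nonnegative and positive semidefinite; $\mathfrak{q}_i(K)$ denotes its largest eigenvalue (its spectral radius). *)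

theory Defs
  imports Complex_Main
begin

definition simplicial_complex :: "'a set \<Rightarrow> 'a set set \<Rightarrow> bool" where
  "simplicial_complex V K \<longleftrightarrow> finite V \<and> K \<subseteq> Pow V
     \<and> (\<forall>F\<in>K. \<forall>G. G \<subseteq> F \<longrightarrow> G \<in> K) \<and> (\<forall>v\<in>V. {v} \<in> K)"

definition faces :: "'a set set \<Rightarrow> nat \<Rightarrow> 'a set set" where
  "faces K i = {F \<in> K. card F = i + 1}"

definition facets :: "'a set set \<Rightarrow> 'a set set" where
  "facets K = {F \<in> K. \<forall>G\<in>K. F \<subseteq> G \<longrightarrow> G = F}"

definition complex_dim :: "'a set set \<Rightarrow> nat" where
  "complex_dim K = Max ((\<lambda>F. card F - 1) ` K)"

definition pure_of_dim :: "'a set set \<Rightarrow> nat \<Rightarrow> bool" where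
  "pure_of_dim K d \<longleftrightarrow> (\<exists>F\<in>K. card F = d + 1) \<and> complex_dim K = d
     \<and> (\<forall>F\<in>facets K. card F = d + 1)"

definition updeg :: "'a set set \<Rightarrow> nat \<Rightarrow> 'a set \<Rightarrow> nat" where
  "updeg K i F = card {G \<in> faces K (i + 1). F \<subseteq> G}"

definition up_neighbors :: "'a set set \<Rightarrow> nat \<Rightarrow> 'a set \<Rightarrow> 'a set set" where
  "up_neighbors K i F = {F' \<in> faces K i. F' \<noteq> F \<and> F \<union> F' \<in> faces K (i + 1)}"

definition signless_up_laplacian ::
    "'a set set \<Rightarrow> nat \<Rightarrow> ('a set \<Rightarrow> real) \<Rightarrow> 'a set \<Rightarrow> real" where
  "signless_up_laplacian K i f F =
     real (updeg K i F) * f F + (\<Sum>F'\<in>up_neighbors K i F. f F')"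

definition up_eigenvalues :: "'a set set \<Rightarrow> nat \<Rightarrow> real set" where
  "up_eigenvalues K i = {\<mu>. \<exists>f. (\<exists>F\<in>faces K i. f F \<noteq> 0)
      \<and> (\<forall>F\<in>faces K i. signless_up_laplacian K i f F = \<mu> * f F)}"

definition q_up :: "'a set set \<Rightarrow> nat \<Rightarrow> real" where
  "q_up K i = Max (up_eigenvalues K i)"

end

theory Submission
  imports Defs "HOL-Analysis.Function_Topology" "Jordan_Normal_Form.Spectral_Radius"
begin

text \<open>Write the signless up Laplacian as \<open>Q = B B\<^sup>T\<close>, where \<open>B\<close> is the 0/1 incidence matrix between
  \<open>i\<close>-faces and \<open>(i+1)\<close>-faces. A maximiser of the Rayleigh quotient \<open>\<parallel>B\<^sup>T h\<parallel>\<^sup>2 / \<parallel>h\<parallel>\<^sup>2\<close> on the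
  (compact) unit sphere is an eigenvector, so the largest eigenvalue bounds this quotient for every
  \<open>h\<close>. Take \<open>h = 1\<close>: each \<open>(i+1)\<close>-face contains exactly \<open>i+2\<close> faces of dimension \<open>i\<close>, so
  \<open>\<parallel>B\<^sup>T 1\<parallel>\<^sup>2 = (i+2)\<^sup>2 |S\<^sub>i\<^sub>+\<^sub>1(K)|\<close>, while the complete \<open>i\<close>-skeleton gives \<open>\<parallel>1\<parallel>\<^sup>2 = (n choose i+1)\<close>.\<close>

text \<open>For a relation \<open>R\<close> between \<open>S\<close> and \<open>T\<close> with incidence matrix \<open>B\<close>, \<open>incidence_sum S R h = B\<^sup>T h\<close>
  and \<open>common_cofaces T R\<close> is the matrix \<open>B B\<^sup>T\<close>.\<close>

definition incidence_sum :: "'b set \<Rightarrow> ('b \<Rightarrow> 'c \<Rightarrow> bool) \<Rightarrow> ('b \<Rightarrow> real) \<Rightarrow> 'c \<Rightarrow> real" where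
  "incidence_sum S R h G = (\<Sum>F\<in>{F\<in>S. R F G}. h F)"

definition common_cofaces :: "'c set \<Rightarrow> ('b \<Rightarrow> 'c \<Rightarrow> bool) \<Rightarrow> 'b \<Rightarrow> 'b \<Rightarrow> real" where
  "common_cofaces T R F F' = real (card {G\<in>T. R F G \<and> R F' G})"

definition kernel_eigenvalues :: "'b set \<Rightarrow> ('b \<Rightarrow> 'b \<Rightarrow> real) \<Rightarrow> real set" where
  "kernel_eigenvalues S c = {\<mu>. \<exists>f. (\<exists>F\<in>S. f F \<noteq> 0) \<and> (\<forall>F\<in>S. (\<Sum>F'\<in>S. c F F' * f F') = \<mu> * f F)}"

lemma incidence_sum_add_scaled:
  "incidence_sum S R (\<lambda>F. f F + t * g F) G = incidence_sum S R f G + t * incidence_sum S R g G"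
  unfolding incidence_sum_def by (simp add: sum.distrib sum_distrib_left)

lemma sum_mult_common_cofaces:
  assumes "finite S" "finite T"
  shows "(\<Sum>F\<in>S. g F * (\<Sum>F'\<in>S. common_cofaces T R F F' * f F'))
       = (\<Sum>G\<in>T. incidence_sum S R g G * incidence_sum S R f G)"
proof -
  have "(\<Sum>F\<in>S. g F * (\<Sum>F'\<in>S. common_cofaces T R F F' * f F'))
      = (\<Sum>F\<in>S. \<Sum>F'\<in>S. \<Sum>G\<in>T. if R F G \<and> R F' G then g F * f F' else 0)"
    using \<open>finite T\<close>
    by (simp add: common_cofaces_def sum.If_cases Int_def sum_distrib_left sum_distrib_right mult_ac
        flip: sum.inter_filter)
  also have "\<dots> = (\<Sum>G\<in>T. \<Sum>F\<in>S. \<Sum>F'\<in>S. if R F G \<and> R F' G then g F * f F' else 0)"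
    by (subst sum.swap) (simp add: sum.swap[of _ S T])
  also have "\<dots> = (\<Sum>G\<in>T. incidence_sum S R g G * incidence_sum S R f G)"
    using \<open>finite S\<close>
    by (auto simp: incidence_sum_def sum.inter_filter sum_product intro!: sum.cong)
  finally show ?thesis .
qed

lemma finite_kernel_eigenvalues:
  assumes "finite S"
  shows "finite (kernel_eigenvalues S c)"
proof -
  obtain e where e: "bij_betw e {0..<card S} S"
    using ex_bij_betw_nat_finite[OF assms] by blast
  define A where "A = mat (card S) (card S) (\<lambda>(a, b). c (e a) (e b))"
  have A: "A \<in> carrier_mat (card S) (card S)" by (simp add: A_def)
  have "kernel_eigenvalues S c \<subseteq> spectrum A"
  proof
    fix \<mu> assume "\<mu> \<in> kernel_eigenvalues S c"
    then obtain f F0 where F0: "F0 \<in> S" "f F0 \<noteq> 0"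
      and ev: "\<And>F. F \<in> S \<Longrightarrow> (\<Sum>F'\<in>S. c F F' * f F') = \<mu> * f F"
      unfolding kernel_eigenvalues_def by blast
    define v where "v = vec (card S) (\<lambda>a. f (e a))"
    obtain a0 where a0: "a0 < card S" "e a0 = F0"
      using e F0(1) unfolding bij_betw_def by (metis atLeastLessThan_iff imageE)
    have "v \<noteq> 0\<^sub>v (card S)"
      using a0 F0(2) by (metis index_vec index_zero_vec(1) v_def)
    moreover have "A *\<^sub>v v = \<mu> \<cdot>\<^sub>v v"
    proof (rule eq_vecI)
      fix a assume "a < dim_vec (\<mu> \<cdot>\<^sub>v v)"
      then have a: "a < card S" by (simp add: v_def)
      then have "e a \<in> S" using e unfolding bij_betw_def by auto
      have "(A *\<^sub>v v) $ a = (\<Sum>b\<in>{0..<card S}. c (e a) (e b) * f (e b))"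
        using a by (simp add: A_def v_def scalar_prod_def)
      also have "\<dots> = (\<Sum>F'\<in>S. c (e a) F' * f F')"
        by (rule sum.reindex_bij_betw[OF e])
      also have "\<dots> = \<mu> * f (e a)" by (rule ev[OF \<open>e a \<in> S\<close>])
      finally show "(A *\<^sub>v v) $ a = (\<mu> \<cdot>\<^sub>v v) $ a" using a by (simp add: v_def)
    qed (simp add: A_def v_def)
    moreover have "v \<in> carrier_vec (card S)" by (simp add: v_def)
    ultimately show "\<mu> \<in> spectrum A"
      using A unfolding spectrum_def eigenvalue_def eigenvector_def by auto
  qed
  then show ?thesis using card_finite_spectrum(1)[OF A] finite_subset by blast
qed

lemma linear_coeff_eq_0_if_quadratic_nonpos:
  fixes a c :: real
  assumes "\<And>t. 2 * t * a + t\<^sup>2 * c \<le> 0"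
  shows "a = 0"
proof (rule ccontr)
  assume "a \<noteq> 0"
  define t where "t = a / (\<bar>c\<bar> + 1)"
  have ta: "t * a > 0"
    using \<open>a \<noteq> 0\<close> by (simp add: t_def field_simps) (auto simp: zero_less_mult_iff)
  have "t\<^sup>2 * \<bar>c\<bar> = t * a * (\<bar>c\<bar> / (\<bar>c\<bar> + 1))"
    by (simp add: t_def power2_eq_square)
  also have "\<dots> < t * a" using ta by (simp add: field_simps)
  finally have "t\<^sup>2 * \<bar>c\<bar> < t * a" .
  moreover have "t\<^sup>2 * - \<bar>c\<bar> \<le> t\<^sup>2 * c" by (rule mult_left_mono) auto
  ultimately show False using ta assms[of t] by linarith
qed

lemma sum_power2_add_scaled:
  fixes f g :: "'c \<Rightarrow> real"
  shows "(\<Sum>x\<in>A. (f x + t * g x)\<^sup>2)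
       = (\<Sum>x\<in>A. (f x)\<^sup>2) + 2 * t * (\<Sum>x\<in>A. f x * g x) + t\<^sup>2 * (\<Sum>x\<in>A. (g x)\<^sup>2)"
  by (simp add: power2_sum power_mult_distrib sum.distrib sum_distrib_left mult_ac)

lemma eigenvector_if_rayleigh_equality:
  assumes "finite S" "finite T"
    and bound: "\<And>h. (\<Sum>G\<in>T. (incidence_sum S R h G)\<^sup>2) \<le> M * (\<Sum>F\<in>S. (h F)\<^sup>2)"
    and eq: "(\<Sum>G\<in>T. (incidence_sum S R f G)\<^sup>2) = M * (\<Sum>F\<in>S. (f F)\<^sup>2)"
    and "F \<in> S"
  shows "(\<Sum>F'\<in>S. common_cofaces T R F F' * f F') = M * f F"
proof -
  define g where "g F = (\<Sum>F'\<in>S. common_cofaces T R F F' * f F') - M * f F" for F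
  define Bg Bf where "Bg = incidence_sum S R g" and "Bf = incidence_sum S R f"
  have cross: "(\<Sum>G\<in>T. Bf G * Bg G) - M * (\<Sum>F\<in>S. f F * g F) = (\<Sum>F\<in>S. (g F)\<^sup>2)"
  proof -
    have "(\<Sum>G\<in>T. Bf G * Bg G) = (\<Sum>F\<in>S. g F * (\<Sum>F'\<in>S. common_cofaces T R F F' * f F'))"
      unfolding Bf_def Bg_def sum_mult_common_cofaces[OF assms(1,2)] by (simp add: mult.commute)
    then show ?thesis
      by (simp add: g_def power2_eq_square sum_distrib_left algebra_simps flip: sum_subtractf)
  qed
  \<comment> \<open>first variation of the Rayleigh bound at \<open>f\<close> in the direction \<open>g = B B\<^sup>T f - M f\<close>\<close>
  have "2 * t * (\<Sum>F\<in>S. (g F)\<^sup>2) + t\<^sup>2 * ((\<Sum>G\<in>T. (Bg G)\<^sup>2) - M * (\<Sum>F\<in>S. (g F)\<^sup>2)) \<le> 0"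
    for t
  proof -
    have "(\<Sum>G\<in>T. (Bf G + t * Bg G)\<^sup>2) \<le> M * (\<Sum>F\<in>S. (f F + t * g F)\<^sup>2)"
      using bound[of "\<lambda>F. f F + t * g F"] by (simp add: incidence_sum_add_scaled Bf_def Bg_def)
    then show ?thesis
      using eq cross unfolding sum_power2_add_scaled Bf_def[symmetric]
      by (simp add: algebra_simps)
  qed
  then have "(\<Sum>F\<in>S. (g F)\<^sup>2) = 0" by (rule linear_coeff_eq_0_if_quadratic_nonpos)
  then have "g F = 0" using assms(1,5) by (simp add: sum_nonneg_eq_0_iff)
  then show ?thesis by (simp add: g_def)
qed

lemma rayleigh_quotient_attains_max:
  fixes S :: "'b set" and T :: "'c set"
  assumes "finite S" "S \<noteq> {}"
  obtains f where "(\<Sum>F\<in>S. (f F)\<^sup>2) = 1"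
    and "\<And>h. (\<Sum>G\<in>T. (incidence_sum S R h G)\<^sup>2)
            \<le> (\<Sum>G\<in>T. (incidence_sum S R f G)\<^sup>2) * (\<Sum>F\<in>S. (h F)\<^sup>2)"
proof -
  define Q where "Q h = (\<Sum>G\<in>T. (incidence_sum S R h G)\<^sup>2)" for h
  define N where "N h = (\<Sum>F\<in>S. (h F)\<^sup>2)" for h :: "'b \<Rightarrow> real"
  \<comment> \<open>pinning the coordinates outside \<open>S\<close> to 0 makes the unit sphere compact (Tychonoff)\<close>
  define Box where "Box = (\<Pi>\<^sub>E F\<in>UNIV. if F \<in> S then {-1..1} else {0::real})"
  define Sph where "Sph = Box \<inter> {h. N h = 1}"
  have "compact Box"
    using compactin_PiE[of "\<lambda>_. euclidean" UNIV "\<lambda>F. if F \<in> S then {-1..1::real} else {0}"]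
    by (auto simp: euclidean_product_topology Box_def)
  moreover have "continuous_on UNIV N" "continuous_on UNIV Q"
    unfolding N_def Q_def incidence_sum_def
    by (intro continuous_intros continuous_on_product_coordinates)+
  ultimately have "compact Sph"
    unfolding Sph_def by (intro compact_Int_closed closed_Collect_eq) auto
  have unit_in_Sph: "h \<in> Sph" if "N h = 1" "\<And>F. F \<notin> S \<Longrightarrow> h F = 0" for h
  proof -
    have "(h F)\<^sup>2 \<le> 1" if "F \<in> S" for F
      using member_le_sum[OF \<open>F \<in> S\<close>, of "\<lambda>F. (h F)\<^sup>2"] \<open>finite S\<close> \<open>N h = 1\<close>
      by (simp add: N_def)
    then show ?thesis
      using that by (auto simp: Sph_def Box_def PiE_iff abs_le_iff abs_square_le_1)
  qed
  obtain F0 where "F0 \<in> S" using assms(2) by blast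
  have "N (\<lambda>F. if F = F0 then 1 else 0) = (\<Sum>F\<in>S. if F = F0 then 1 else 0)"
    unfolding N_def by (rule sum.cong) auto
  then have "(\<lambda>F. if F = F0 then 1 else 0) \<in> Sph"
    using \<open>F0 \<in> S\<close> \<open>finite S\<close> by (intro unit_in_Sph) auto
  then obtain f where "f \<in> Sph" and f_max: "\<And>h. h \<in> Sph \<Longrightarrow> Q h \<le> Q f"
    using continuous_attains_sup[OF \<open>compact Sph\<close> _ continuous_on_subset] \<open>continuous_on UNIV Q\<close>
    by (metis empty_iff subset_UNIV)
  have "Q h \<le> Q f * N h" for h
  proof (cases "N h = 0")
    case True
    then have "\<forall>F\<in>S. h F = 0" using \<open>finite S\<close> by (simp add: N_def sum_nonneg_eq_0_iff)
    then have "Q h = 0" by (simp add: Q_def incidence_sum_def)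
    then show ?thesis using True by simp
  next
    case False
    have "N h \<ge> 0" by (simp add: N_def sum_nonneg)
    with False have "N h > 0" by simp
    define u where "u F = (if F \<in> S then h F / sqrt (N h) else 0)" for F
    have "N u = 1"
      by (simp add: N_def u_def power_divide \<open>N h > 0\<close> sum_nonneg False[unfolded N_def] flip: sum_divide_distrib)
    have "Q u = Q h / N h"
      by (simp add: Q_def u_def incidence_sum_def power_divide \<open>N h > 0\<close> \<open>N h \<ge> 0\<close>
          flip: sum_divide_distrib)
    moreover have "Q u \<le> Q f" using \<open>N u = 1\<close> by (intro f_max unit_in_Sph) (auto simp: u_def)
    ultimately show ?thesis using \<open>N h > 0\<close> by (simp add: pos_divide_le_eq mult.commute)
  qed
  moreover have "N f = 1" using \<open>f \<in> Sph\<close> by (simp add: Sph_def)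
  ultimately show ?thesis using that unfolding Q_def N_def by blast
qed

lemma rayleigh_bound_by_eigenvalue:
  fixes S :: "'b set" and T :: "'c set"
  assumes "finite S" "finite T" "S \<noteq> {}"
  obtains M where "M \<in> kernel_eigenvalues S (common_cofaces T R)"
    and "\<And>h. (\<Sum>G\<in>T. (incidence_sum S R h G)\<^sup>2) \<le> M * (\<Sum>F\<in>S. (h F)\<^sup>2)"
proof -
  obtain f where unit: "(\<Sum>F\<in>S. (f F)\<^sup>2) = 1"
    and bound: "\<And>h. (\<Sum>G\<in>T. (incidence_sum S R h G)\<^sup>2)
                  \<le> (\<Sum>G\<in>T. (incidence_sum S R f G)\<^sup>2) * (\<Sum>F\<in>S. (h F)\<^sup>2)"
    using rayleigh_quotient_attains_max[OF assms(1,3)] by blast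
  define M where "M = (\<Sum>G\<in>T. (incidence_sum S R f G)\<^sup>2)"
  have "\<exists>F\<in>S. f F \<noteq> 0" using unit by (metis (no_types, lifting) sum.neutral zero_neq_one zero_power2)
  moreover have "(\<Sum>F'\<in>S. common_cofaces T R F F' * f F') = M * f F" if "F \<in> S" for F
    using assms(1,2) bound unit \<open>F \<in> S\<close> unfolding M_def
    by (intro eigenvector_if_rayleigh_equality) simp_all
  ultimately have "M \<in> kernel_eigenvalues S (common_cofaces T R)"
    unfolding kernel_eigenvalues_def by blast
  with bound show ?thesis using that unfolding M_def by blast
qed

lemma finite_complex: "simplicial_complex V K \<Longrightarrow> finite K"
  unfolding simplicial_complex_def by (meson finite_Pow_iff finite_subset)

lemma finite_faces: "simplicial_complex V K \<Longrightarrow> finite (faces K i)"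
  by (simp add: faces_def finite_complex)

lemma Un_eq_if_card_Suc:
  assumes "F \<noteq> F'" "card F = k" "card F' = k" "F \<union> F' \<subseteq> G" "finite G" "card G = Suc k"
  shows "F \<union> F' = G"
proof (rule card_subset_eq[OF \<open>finite G\<close> \<open>F \<union> F' \<subseteq> G\<close>])
  have "finite (F \<union> F')" using assms(4,5) finite_subset by blast
  moreover have "\<not> F' \<subseteq> F"
    using assms(1-3) \<open>finite (F \<union> F')\<close> by (metis card_subset_eq finite_Un)
  ultimately have "card F < card (F \<union> F')" by (intro psubset_card_mono) auto
  then show "card (F \<union> F') = card G"
    using assms(2,6) card_mono[OF assms(5,4)] by simp
qed

lemma common_cofaces_faces_distinct:
  assumes "F \<in> faces K i" "F' \<in> faces K i - {F}"
  shows "common_cofaces (faces K (i + 1)) (\<subseteq>) F F' = (if F' \<in> up_neighbors K i F then 1 else 0)"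
proof -
  have "G = F \<union> F'" if "G \<in> faces K (i + 1)" "F \<union> F' \<subseteq> G" for G
    using assms that
    by (intro Un_eq_if_card_Suc[of F F' "i + 1", symmetric]) (auto simp: faces_def card_ge_0_finite)
  then have "{G \<in> faces K (i + 1). F \<subseteq> G \<and> F' \<subseteq> G} = {F \<union> F'} \<inter> faces K (i + 1)"
    by blast
  then show ?thesis
    using assms by (simp add: common_cofaces_def up_neighbors_def Int_insert_left)
qed

lemma signless_up_laplacian_eq_common_cofaces:
  assumes "finite (faces K i)" "F \<in> faces K i"
  shows "signless_up_laplacian K i f F
       = (\<Sum>F'\<in>faces K i. common_cofaces (faces K (i + 1)) (\<subseteq>) F F' * f F')"
proof -
  have "(\<Sum>F'\<in>faces K i - {F}. common_cofaces (faces K (i + 1)) (\<subseteq>) F F' * f F')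
      = (\<Sum>F'\<in>faces K i - {F}. if F' \<in> up_neighbors K i F then f F' else 0)"
    by (intro sum.cong refl) (simp only: common_cofaces_faces_distinct[OF assms(2)] if_distribR; simp)
  also have "\<dots> = (\<Sum>F'\<in>up_neighbors K i F. f F')"
    using assms(1) by (simp add: sum.If_cases Int_absorb1) (auto simp: up_neighbors_def intro!: sum.cong)
  finally show ?thesis
    using assms by (simp add: signless_up_laplacian_def sum.remove common_cofaces_def updeg_def)
qed

lemma up_eigenvalues_eq_kernel_eigenvalues:
  "finite (faces K i)
   \<Longrightarrow> up_eigenvalues K i = kernel_eigenvalues (faces K i) (common_cofaces (faces K (i + 1)) (\<subseteq>))"
  unfolding up_eigenvalues_def kernel_eigenvalues_def
  by (simp add: signless_up_laplacian_eq_common_cofaces)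

lemma card_subfaces:
  assumes "simplicial_complex V K" "G \<in> faces K (i + 1)"
  shows "card {F \<in> faces K i. F \<subseteq> G} = i + 2"
proof -
  have "finite G" "card G = i + 2" using assms(2) by (auto simp: faces_def card_ge_0_finite)
  moreover have "{F \<in> faces K i. F \<subseteq> G} = {F. F \<subseteq> G \<and> card F = i + 1}"
    using assms unfolding simplicial_complex_def faces_def by blast
  ultimately show ?thesis by (simp add: n_subsets)
qed

lemma card_faces_complete_skeleton:
  assumes "simplicial_complex V K" "\<forall>F. F \<subseteq> V \<and> card F = i + 1 \<longrightarrow> F \<in> K"
  shows "card (faces K i) = card V choose (i + 1)"
proof -
  have "faces K i = {F. F \<subseteq> V \<and> card F = i + 1}"
    using assms unfolding faces_def simplicial_complex_def by auto
  then show ?thesis using assms(1) by (simp add: n_subsets simplicial_complex_def)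
qed

theorem mainTheorem1:
  fixes V :: "'a set" and K :: "'a set set" and i n :: nat
  assumes "simplicial_complex V K"
    and "card V = n"
    and "pure_of_dim K (i + 1)"
    and "\<forall>F. F \<subseteq> V \<and> card F = i + 1 \<longrightarrow> F \<in> K"
  shows "real (card (faces K (i + 1)))
           \<le> q_up K i * real (n choose (i + 1)) / (real i + 2) ^ 2"
proof -
  let ?S = "faces K i" and ?T = "faces K (i + 1)"
  have fin: "finite ?S" "finite ?T" using finite_faces[OF assms(1)] by auto
  obtain G0 where "G0 \<in> ?T" using assms(3) by (auto simp: pure_of_dim_def faces_def)
  then have "?S \<noteq> {}" using card_subfaces[OF assms(1)] by fastforce
  then obtain M where M: "M \<in> up_eigenvalues K i"
    and bound: "\<And>h. (\<Sum>G\<in>?T. (incidence_sum ?S (\<subseteq>) h G)\<^sup>2) \<le> M * (\<Sum>F\<in>?S. (h F)\<^sup>2)"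
    using rayleigh_bound_by_eigenvalue[OF fin] up_eigenvalues_eq_kernel_eigenvalues[OF fin(1)]
    by metis
  have "M \<le> q_up K i"
    using M fin(1) unfolding q_up_def
    by (simp add: Max_ge finite_kernel_eigenvalues up_eigenvalues_eq_kernel_eigenvalues)
  have "incidence_sum ?S (\<subseteq>) (\<lambda>_. 1) G = real i + 2" if "G \<in> ?T" for G
    using card_subfaces[OF assms(1) that] by (simp add: incidence_sum_def)
  then have "real (card ?T) * (real i + 2)\<^sup>2 \<le> M * real (n choose (i + 1))"
    using bound[of "\<lambda>_. 1"] card_faces_complete_skeleton[OF assms(1,4)] assms(2) by simp
  also have "\<dots> \<le> q_up K i * real (n choose (i + 1))"
    using \<open>M \<le> q_up K i\<close> by (simp add: mult_right_mono)
  finally show ?thesis by (simp add: pos_le_divide_eq)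
qed

end
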